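(* Let $g\ge1$ be an integer, $A\ge1$ real, $\mathbf n\ge\mathbf 1_g$ in $\mathbb N^g$, and $f=\sum_{\mathbf k\ge\mathbf 0_g}f_{\mathbf k}\mathbf z^{\mathbf k}$ a power series of order of magnitude $(A,\mathbf n)$. Let $\mathbf c\in P(\mathbf 0_g,1)$ and let $F_{\mathbf c}(\mathbf y)=f(\mathbf c+\mathbf y\star(\mathbf 1_g-\|\mathbf c\|))$ be the series recentered at $\mathbf c$. Then $F_{\mathbf c}$ is a power series of order of magnitude $(A_{\mathbf c},\mathbf n+\mathbf 1_g)$ with $A_{\mathbf c}=\mathbf n!\,A\,\exp(g+|\mathbf n|_1)\,2^{g+|\mathbf n|_1}(\mathbf 1_g-\|\mathbf c\|)^{-\mathbf n-\mathbf 2_g}$.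
   Context: For $\mathbf x=(x_1,\dots,x_g)\in\mathbb C^g$: $|\mathbf x|_1=\sum|x_k|$, $\|\mathbf x\|=(|x_1|,\dots,|x_g|)$; $\mathbf x\star\mathbf y=(x_1y_1,\dots,x_gy_g)$; $\mathbf 0_g,\mathbf 1_g,\mathbf 2_g$ are the constant vectors; inequalities between vectors are componentwise; multi-index notation: $\mathbf x^{\mathbf k}=\prod x_m^{k_m}$, $\mathbf n!=\prod n_m!$. $P(\mathbf x,r)=\prod_kD(x_k,r)$ is the open polydisc. A series $f=\sum_{\mathbf k}f_{\mathbf k}\mathbf z^{\mathbf k}$ has order of magnitude $(A,\mathbf n)$ ($A\ge1$, $\mathbf n\ge\mathbf 1_g$) if $|f_{\mathbf k}|\le A(\mathbf k+\mathbf 1_g)^{\mathbf n}=A\prod_m(k_m+1)^{n_m}$ for all $\mathbf k$. *)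

theory Defs
  imports "HOL-Analysis.Analysis"
begin

text \<open>Multi-indices are vectors in nat ^ 'g, points are vectors in complex ^ 'g;
  the dimension g is CARD('g) (always \<ge> 1).\<close>

definition mpow :: "complex ^ 'g \<Rightarrow> nat ^ 'g \<Rightarrow> complex" where
  "mpow z k = (\<Prod>m\<in>UNIV. (z $ m) ^ (k $ m))"

definition l1norm_nat :: "nat ^ 'g \<Rightarrow> nat" where
  "l1norm_nat n = (\<Sum>m\<in>UNIV. n $ m)"

definition mfact :: "nat ^ 'g \<Rightarrow> real" where
  "mfact n = (\<Prod>m\<in>UNIV. fact (n $ m))"

definition in_polydisc :: "complex ^ 'g \<Rightarrow> complex ^ 'g \<Rightarrow> real \<Rightarrow> bool" where
  "in_polydisc z x r \<longleftrightarrow> (\<forall>m. dist (z $ m) (x $ m) < r)"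

definition order_of_magnitude :: "(nat ^ 'g \<Rightarrow> complex) \<Rightarrow> real \<Rightarrow> nat ^ 'g \<Rightarrow> bool" where
  "order_of_magnitude f A n \<longleftrightarrow> A \<ge> 1 \<and> (\<forall>m. n $ m \<ge> 1) \<and>
     (\<forall>k. norm (f k) \<le> A * (\<Prod>m\<in>UNIV. (real (k $ m) + 1) ^ (n $ m)))"

definition ps_eval :: "(nat ^ 'g \<Rightarrow> complex) \<Rightarrow> complex ^ 'g \<Rightarrow> complex" where
  "ps_eval f z = infsum (\<lambda>k. f k * mpow z k) UNIV"

end

theory Submission
  imports Defs
begin

text \<open>Expanding every \<open>(c\<^sub>m + (1 - |c\<^sub>m|) y\<^sub>m)\<^bsup>k\<^sub>m\<^esup>\<close> binomially gives the
  coefficients \<open>F\<^sub>j = \<Sum>\<^sub>k f\<^sub>k \<Prod>\<^sub>m C(k\<^sub>m, j\<^sub>m) c\<^sub>m\<^bsup>k\<^sub>m - j\<^sub>m\<^esup> (1 - |c\<^sub>m|)\<^bsup>j\<^sub>m\<^esup>\<close>;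
  the rearrangement is justified by absolute convergence of \<open>f\<close> at the point
  \<open>|c| + (1 - |c|) \<star> |y|\<close> of the unit polydisc. The bound \<open>(k + 1)\<^sup>n \<le> n! C(k + n, n)\<close>
  turns each one-dimensional factor of the majorant of \<open>|F\<^sub>j|\<close> into a negative binomial
  series, with sum at most \<open>n! (j + 1)\<^sup>n / (1 - |c|)\<^bsup>n + 1\<^esup>\<close>. This yields the order
  of magnitude \<open>(n! A \<Prod>\<^sub>m (1 - |c\<^sub>m|)\<^bsup>-n\<^sub>m - 2\<^esup>, n + 1)\<close>, which is sharper than
  the stated one by the factor \<open>exp (g + |n|\<^sub>1) 2\<^bsup>g + |n|\<^sub>1\<^esup>\<close>.\<close>

lemma negative_binomial_sums:
  fixes s :: real
  assumes "\<bar>s\<bar> < 1"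
  shows "(\<lambda>l. real ((l + M) choose M) * s ^ l) sums (1 / (1 - s) ^ (M + 1))"
proof -
  have "\<bar>-s\<bar> < 1" using assms by simp
  from gen_binomial_real[OF this, of "- real (M + 1)"]
  have "(\<lambda>l. (- real (M + 1) gchoose l) * (- s) ^ l) sums (1 - s) powr (- real (M + 1))"
    by simp
  also have "(\<lambda>l. (- real (M + 1) gchoose l) * (- s) ^ l) = (\<lambda>l. real ((l + M) choose M) * s ^ l)"
  proof
    fix l
    have "(- real (M + 1) gchoose l) = (-1) ^ l * (real (M + l) gchoose l)"
      by (subst gbinomial_minus) (simp add: add_ac)
    also have "real (M + l) gchoose l = real ((l + M) choose M)"
      by (metis add.commute add_diff_cancel_left' binomial_gbinomial binomial_symmetric le_add2)
    finally have "(- real (M + 1) gchoose l) * (- s) ^ l = real ((l + M) choose M) * ((-1) ^ l * (- s) ^ l)"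
      by (simp only: mult_ac)
    also have "(-1) ^ l * (- s) ^ l = s ^ l"
      by (simp flip: power_mult_distrib)
    finally show "(- real (M + 1) gchoose l) * (- s) ^ l = real ((l + M) choose M) * s ^ l" .
  qed
  also have "(1 - s) powr (- real (M + 1)) = 1 / (1 - s) ^ (M + 1)"
  proof -
    have "(1 - s) powr (- real (M + 1)) = 1 / (1 - s) powr (real (M + 1))"
      by (rule powr_minus_divide)
    also have "(1 - s) powr (real (M + 1)) = (1 - s) ^ (M + 1)"
      using assms by (intro powr_realpow) simp
    finally show ?thesis .
  qed
  finally show ?thesis .
qed

lemma power_le_fact_mult_choose: "(i + 1) ^ n \<le> fact n * ((i + n) choose n)"
proof (induction n)
  case 0
  then show ?case by simp
next
  case (Suc n)
  have "(i + 1) ^ Suc n \<le> Suc (i + n) * (fact n * ((i + n) choose n))"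
    unfolding power_Suc using Suc by (intro mult_le_mono) simp_all
  also have "\<dots> = fact n * (Suc n * (Suc (i + n) choose Suc n))"
    by (simp only: Suc_times_binomial mult.left_commute)
  also have "\<dots> = fact (Suc n) * ((i + Suc n) choose Suc n)"
    by (simp only: fact_Suc of_nat_id add_Suc_right mult_ac)
  finally show ?case .
qed

lemma choose_le_power: "((j + n) choose n) \<le> (j + 1) ^ n"
proof (induction n)
  case 0
  then show ?case by simp
next
  case (Suc n)
  have "Suc n * ((j + Suc n) choose Suc n) = Suc (j + n) * ((j + n) choose n)"
    using Suc_times_binomial[of n "j + n"] by simp
  also have "\<dots> \<le> (Suc n * (j + 1)) * (j + 1) ^ n"
    using Suc by (intro mult_le_mono) simp_all
  also have "\<dots> = Suc n * (j + 1) ^ Suc n"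
    by (simp only: power_Suc mult.assoc)
  finally show ?case
    by (simp only: Suc_mult_le_cancel1)
qed

definition recenter_coeff :: "'a::comm_semiring_1 \<Rightarrow> 'a \<Rightarrow> nat \<Rightarrow> nat \<Rightarrow> 'a" where
  "recenter_coeff x r i j = (if j \<le> i then of_nat (i choose j) * x ^ (i - j) * r ^ j else 0)"

lemma recenter_coeff_has_sum:
  fixes x r y :: "'a::{comm_semiring_1, topological_space}"
  shows "((\<lambda>j. recenter_coeff x r i j * y ^ j) has_sum (x + r * y) ^ i) UNIV"
proof (rule has_sum_finite_neutralI[of "{..i}"])
  show "(x + r * y) ^ i = (\<Sum>j\<in>{..i}. recenter_coeff x r i j * y ^ j)"
    by (subst add.commute) (simp add: binomial_ring recenter_coeff_def power_mult_distrib mult_ac)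
qed (auto simp: recenter_coeff_def)

lemma norm_recenter_coeff:
  fixes x r :: "'a::real_normed_field"
  shows "norm (recenter_coeff x r i j) = recenter_coeff (norm x) (norm r) i j"
  by (simp add: recenter_coeff_def norm_mult norm_power)

lemma recenter_coeff_nonneg: "0 \<le> x \<Longrightarrow> 0 \<le> r \<Longrightarrow> 0 \<le> recenter_coeff (x::real) r i j"
  by (simp add: recenter_coeff_def)

lemma weighted_recenter_coeff_summable_bound:
  fixes s :: real
  assumes s: "0 \<le> s" "s < 1"
  shows "(\<lambda>i. (real i + 1) ^ n * recenter_coeff s (1 - s) i j) summable_on UNIV"
    and "(\<Sum>\<^sub>\<infinity>i. (real i + 1) ^ n * recenter_coeff s (1 - s) i j)
           \<le> fact n * (real j + 1) ^ n / (1 - s) ^ (n + 1)"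
proof -
  define M where "M = j + n"
  define K where "K = fact n * real (M choose n) * (1 - s) ^ j"
  define G where "G i = (if j \<le> i then K * (real ((i + n) choose M) * s ^ (i - j)) else 0)" for i
  have "(\<lambda>l. K * (real ((l + M) choose M) * s ^ l)) sums (K * (1 / (1 - s) ^ (M + 1)))"
    using s by (intro sums_mult negative_binomial_sums) simp
  also have "(\<lambda>l. K * (real ((l + M) choose M) * s ^ l)) = (\<lambda>l. G (l + j))"
    by (auto simp: G_def M_def algebra_simps)
  finally have "G sums (K / (1 - s) ^ (M + 1))"
    by (subst (asm) sums_zero_iff_shift) (auto simp: G_def)
  moreover have "0 \<le> G i" for i
    using s by (simp add: G_def K_def)
  ultimately have G: "(G has_sum K / (1 - s) ^ (M + 1)) UNIV"
    by (rule sums_nonneg_imp_has_sum)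
  have term_nonneg: "0 \<le> (real i + 1) ^ n * recenter_coeff s (1 - s) i j" for i
    using s by (simp add: recenter_coeff_nonneg)
  \<comment> \<open>\<open>(i + 1)\<^sup>n C(i, j) \<le> n! C(i + n, n) C(i, j) = n! C(i + n, j + n) C(j + n, n)\<close>\<close>
  have term_le: "(real i + 1) ^ n * recenter_coeff s (1 - s) i j \<le> G i" for i
  proof (cases "j \<le> i")
    case True
    have "real ((i + 1) ^ n) \<le> real (fact n * ((i + n) choose n))"
      using power_le_fact_mult_choose by (rule of_nat_mono)
    then have "(real i + 1) ^ n \<le> fact n * real ((i + n) choose n)"
      by (simp add: add.commute)
    then have "(real i + 1) ^ n * (real (i choose j) * s ^ (i - j) * (1 - s) ^ j)
        \<le> fact n * real ((i + n) choose n) * (real (i choose j) * s ^ (i - j) * (1 - s) ^ j)"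
      using s by (intro mult_right_mono) simp_all
    then have "(real i + 1) ^ n * recenter_coeff s (1 - s) i j
        \<le> fact n * real ((i choose j) * ((i + n) choose n)) * s ^ (i - j) * (1 - s) ^ j"
      using True by (simp add: recenter_coeff_def mult_ac)
    also have "(i choose j) * ((i + n) choose n) = ((i + n) choose M) * (M choose n)"
      using choose_mult[of n M "i + n"] True by (simp add: M_def mult.commute)
    finally show ?thesis
      using True by (simp add: G_def K_def mult_ac)
  qed (simp add: G_def recenter_coeff_def)
  show summable: "(\<lambda>i. (real i + 1) ^ n * recenter_coeff s (1 - s) i j) summable_on UNIV"
    using has_sum_imp_summable[OF G] term_le term_nonneg by (rule summable_on_comparison_test)
  have "(\<Sum>\<^sub>\<infinity>i. (real i + 1) ^ n * recenter_coeff s (1 - s) i j) \<le> infsum G UNIV"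
    using summable has_sum_imp_summable[OF G] term_le by (rule infsum_mono)
  also have "\<dots> = K / (1 - s) ^ (M + 1)"
    using G by (rule infsumI)
  also have "\<dots> = fact n * real (M choose n) / (1 - s) ^ (n + 1)"
    using s by (simp add: K_def M_def power_add)
  also have "\<dots> \<le> fact n * (real j + 1) ^ n / (1 - s) ^ (n + 1)"
  proof -
    have "real (M choose n) \<le> real ((j + 1) ^ n)"
      unfolding M_def using choose_le_power by (rule of_nat_mono)
    then show ?thesis
      using s by (intro divide_right_mono mult_left_mono) (simp_all add: add.commute)
  qed
  finally show "(\<Sum>\<^sub>\<infinity>i. (real i + 1) ^ n * recenter_coeff s (1 - s) i j)
      \<le> fact n * (real j + 1) ^ n / (1 - s) ^ (n + 1)" .
qed

lemma nonneg_prod_summable_on_PiE: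
  fixes a :: "'i \<Rightarrow> 'b \<Rightarrow> real"
  assumes fin: "finite I" and nonneg: "\<And>i x. 0 \<le> a i x"
    and summable: "\<And>i. i \<in> I \<Longrightarrow> a i summable_on B i"
  shows "(\<lambda>p. \<Prod>i\<in>I. a i (p i)) summable_on PiE I B"
proof (rule nonneg_bdd_above_summable_on)
  show "0 \<le> (\<Prod>i\<in>I. a i (p i))" for p
    by (simp add: prod_nonneg nonneg)
  show "bdd_above (sum (\<lambda>p. \<Prod>i\<in>I. a i (p i)) ` {P. P \<subseteq> PiE I B \<and> finite P})"
  proof (rule bdd_aboveI2)
    fix P assume "P \<in> {P. P \<subseteq> PiE I B \<and> finite P}"
    then have P: "P \<subseteq> PiE I B" "finite P" by auto
    \<comment> \<open>A finite set of tuples lies in the box spanned by its coordinate projections.\<close>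
    define B' where "B' i = (\<lambda>p. p i) ` P" for i
    have "(\<Sum>p\<in>P. \<Prod>i\<in>I. a i (p i)) \<le> (\<Sum>p\<in>PiE I B'. \<Prod>i\<in>I. a i (p i))"
      using P by (intro sum_mono2) (auto simp: finite_PiE fin B'_def PiE_iff prod_nonneg nonneg)
    also have "\<dots> = (\<Prod>i\<in>I. \<Sum>y\<in>B' i. a i y)"
      using P by (intro prod_sum_PiE[symmetric]) (simp_all add: fin B'_def)
    also have "\<dots> \<le> (\<Prod>i\<in>I. infsum (a i) (B i))"
    proof (rule prod_mono)
      fix i assume i: "i \<in> I"
      have "B' i \<subseteq> B i" using P i by (auto simp: B'_def PiE_iff)
      then show "0 \<le> (\<Sum>y\<in>B' i. a i y) \<and> (\<Sum>y\<in>B' i. a i y) \<le> infsum (a i) (B i)"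
        using P finite_sum_le_has_sum[OF has_sum_infsum[OF summable[OF i]]]
        by (simp add: sum_nonneg nonneg B'_def)
    qed
    finally show "(\<Sum>p\<in>P. \<Prod>i\<in>I. a i (p i)) \<le> (\<Prod>i\<in>I. infsum (a i) (B i))" .
  qed
qed

lemma has_sum_prod_vec_nth:
  fixes a :: "'g::finite \<Rightarrow> nat \<Rightarrow> 'c::{real_normed_field, banach}"
  assumes "\<And>m. (\<lambda>i. norm (a m i)) summable_on UNIV"
  shows "((\<lambda>k::nat ^ 'g. \<Prod>m\<in>UNIV. a m (k $ m)) has_sum (\<Prod>m\<in>UNIV. infsum (a m) UNIV)) UNIV"
proof -
  have "(\<lambda>p. \<Prod>m\<in>UNIV. norm (a m (p m))) summable_on PiE UNIV (\<lambda>_. UNIV)"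
    using assms by (intro nonneg_prod_summable_on_PiE) simp_all
  then have "(\<lambda>p. \<Prod>m\<in>UNIV. a m (p m)) abs_summable_on PiE UNIV (\<lambda>_. UNIV)"
    by (simp only: prod_norm)
  then have "(\<lambda>p. \<Prod>m\<in>UNIV. a m (p m)) abs_summable_on UNIV"
    by (simp add: PiE_UNIV_domain)
  then have "(\<lambda>p. \<Prod>m\<in>UNIV. a m (p m)) summable_on UNIV"
    by (rule abs_summable_summable)
  moreover have "infsum (\<lambda>p. \<Prod>m\<in>UNIV. a m (p m)) UNIV = (\<Prod>m\<in>UNIV. infsum (a m) UNIV)"
    using infsum_prod_PiE_abs[of UNIV a "\<lambda>_. UNIV"] assms by simp
  ultimately have "((\<lambda>p. \<Prod>m\<in>UNIV. a m (p m)) has_sum (\<Prod>m\<in>UNIV. infsum (a m) UNIV)) UNIV"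
    using has_sum_infsum by fastforce
  moreover have "bij_betw vec_nth (UNIV :: (nat ^ 'g) set) UNIV"
    by (rule bij_betwI[where g = vec_lambda]) auto
  ultimately show ?thesis
    using has_sum_reindex_bij_betw[where f = "\<lambda>p. \<Prod>m\<in>UNIV. a m (p m)"] by blast
qed

lemma has_sum_prod_recenter_coeff:
  fixes x r y :: "'g::finite \<Rightarrow> 'a::{real_normed_field, banach}"
  shows "((\<lambda>j::nat ^ 'g. \<Prod>m\<in>UNIV. recenter_coeff (x m) (r m) (k $ m) (j $ m) * y m ^ (j $ m))
           has_sum (\<Prod>m\<in>UNIV. (x m + r m * y m) ^ (k $ m))) UNIV"
proof -
  have "(\<lambda>j. norm (recenter_coeff (x m) (r m) (k $ m) j * y m ^ j)) summable_on UNIV" for m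
    using has_sum_imp_summable[OF recenter_coeff_has_sum[of "norm (x m)" "norm (r m)" "k $ m" "norm (y m)"]]
    by (simp add: norm_mult norm_power norm_recenter_coeff)
  then have "((\<lambda>j::nat ^ 'g. \<Prod>m\<in>UNIV. recenter_coeff (x m) (r m) (k $ m) (j $ m) * y m ^ (j $ m))
      has_sum (\<Prod>m\<in>UNIV. \<Sum>\<^sub>\<infinity>j. recenter_coeff (x m) (r m) (k $ m) j * y m ^ j)) UNIV"
    by (rule has_sum_prod_vec_nth)
  also have "(\<Prod>m\<in>UNIV. \<Sum>\<^sub>\<infinity>j. recenter_coeff (x m) (r m) (k $ m) j * y m ^ j)
      = (\<Prod>m\<in>UNIV. (x m + r m * y m) ^ (k $ m))"
    by (intro prod.cong refl infsumI recenter_coeff_has_sum)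
  finally show ?thesis .
qed

lemma has_sum_iterated_swap:
  fixes g :: "'a \<Rightarrow> 'b \<Rightarrow> 'c::{banach, uniform_topological_group_add}"
  assumes norms: "\<And>k. k \<in> A \<Longrightarrow> ((\<lambda>j. norm (g k j)) has_sum N k) B"
    and N: "N summable_on A"
    and rows: "\<And>k. k \<in> A \<Longrightarrow> ((\<lambda>j. g k j) has_sum a k) B"
    and cols: "\<And>j. j \<in> B \<Longrightarrow> ((\<lambda>k. g k j) has_sum b j) A"
  shows "(b has_sum infsum a A) B"
proof -
  have "(\<lambda>(k, j). norm (g k j)) summable_on A \<times> B"
    using norms N by (intro summable_on_SigmaI[where f = "\<lambda>(k, j). norm (g k j)"]) simp_all
  moreover have "(\<lambda>(k, j). norm (g k j)) = (\<lambda>x. norm ((\<lambda>(k, j). g k j) x))"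
    by auto
  ultimately have summable: "(\<lambda>(k, j). g k j) summable_on A \<times> B"
    by (metis abs_summable_summable)
  have "infsum a A = (\<Sum>\<^sub>\<infinity>k\<in>A. \<Sum>\<^sub>\<infinity>j\<in>B. g k j)"
    using rows by (intro infsum_cong) (metis infsumI)
  also have "\<dots> = (\<Sum>\<^sub>\<infinity>(k, j)\<in>A \<times> B. g k j)"
    using summable by (rule infsum_Sigma'_banach)
  finally have "((\<lambda>(k, j). g k j) has_sum infsum a A) (A \<times> B)"
    using has_sum_infsum[OF summable] by simp
  then have "((\<lambda>(j, k). g k j) has_sum infsum a A) (B \<times> A)"
    using has_sum_swap[where f = "\<lambda>(k, j). g k j" and A = A and B = B] by simp
  then show ?thesis
    using cols by (intro has_sum_Sigma'[where f = "\<lambda>(j, k). g k j"]) simp_all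
qed

lemma order_of_magnitude_weighted_summable:
  fixes f :: "nat ^ 'g \<Rightarrow> complex" and w :: "'g \<Rightarrow> nat \<Rightarrow> real"
  assumes f: "order_of_magnitude f A n" and w: "\<And>m i. 0 \<le> w m i"
    and summable: "\<And>m. (\<lambda>i. (real i + 1) ^ (n $ m) * w m i) summable_on UNIV"
  shows "(\<lambda>k. norm (f k) * (\<Prod>m\<in>UNIV. w m (k $ m))) summable_on UNIV"
    and "(\<Sum>\<^sub>\<infinity>k. norm (f k) * (\<Prod>m\<in>UNIV. w m (k $ m)))
           \<le> A * (\<Prod>m\<in>UNIV. \<Sum>\<^sub>\<infinity>i. (real i + 1) ^ (n $ m) * w m i)"
proof -
  define H where "H m = (\<lambda>i. (real i + 1) ^ (n $ m) * w m i)" for m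
  have "(\<lambda>i. norm (H m i)) summable_on UNIV" for m
    using summable[of m] by (simp add: H_def w)
  then have majorant: "((\<lambda>k::nat ^ 'g. A * (\<Prod>m\<in>UNIV. H m (k $ m)))
      has_sum A * (\<Prod>m\<in>UNIV. infsum (H m) UNIV)) UNIV"
    by (intro has_sum_cmult_right has_sum_prod_vec_nth)
  have le: "norm (f k) * (\<Prod>m\<in>UNIV. w m (k $ m)) \<le> A * (\<Prod>m\<in>UNIV. H m (k $ m))" for k
  proof -
    have "norm (f k) \<le> A * (\<Prod>m\<in>UNIV. (real (k $ m) + 1) ^ (n $ m))"
      using f by (simp add: order_of_magnitude_def)
    then have "norm (f k) * (\<Prod>m\<in>UNIV. w m (k $ m))
        \<le> A * (\<Prod>m\<in>UNIV. (real (k $ m) + 1) ^ (n $ m)) * (\<Prod>m\<in>UNIV. w m (k $ m))"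
      by (intro mult_right_mono prod_nonneg w)
    then show ?thesis
      by (simp add: H_def prod.distrib mult.assoc)
  qed
  have nonneg: "0 \<le> norm (f k) * (\<Prod>m\<in>UNIV. w m (k $ m))" for k
    by (simp add: prod_nonneg w)
  show summable': "(\<lambda>k. norm (f k) * (\<Prod>m\<in>UNIV. w m (k $ m))) summable_on UNIV"
    using has_sum_imp_summable[OF majorant] le nonneg by (rule summable_on_comparison_test)
  have "(\<Sum>\<^sub>\<infinity>k. norm (f k) * (\<Prod>m\<in>UNIV. w m (k $ m))) \<le> (\<Sum>\<^sub>\<infinity>k. A * (\<Prod>m\<in>UNIV. H m (k $ m)))"
    using summable' has_sum_imp_summable[OF majorant] le by (rule infsum_mono)
  also have "\<dots> = A * (\<Prod>m\<in>UNIV. infsum (H m) UNIV)"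
    using majorant by (rule infsumI)
  finally show "(\<Sum>\<^sub>\<infinity>k. norm (f k) * (\<Prod>m\<in>UNIV. w m (k $ m)))
      \<le> A * (\<Prod>m\<in>UNIV. \<Sum>\<^sub>\<infinity>i. (real i + 1) ^ (n $ m) * w m i)"
    by (simp add: H_def)
qed

definition recenter_mcoeff :: "complex ^ 'g \<Rightarrow> nat ^ 'g \<Rightarrow> nat ^ 'g \<Rightarrow> complex" where
  "recenter_mcoeff c k j =
     (\<Prod>m\<in>UNIV. recenter_coeff (c $ m) (complex_of_real (1 - norm (c $ m))) (k $ m) (j $ m))"

definition recentered :: "(nat ^ 'g \<Rightarrow> complex) \<Rightarrow> complex ^ 'g \<Rightarrow> nat ^ 'g \<Rightarrow> complex" where
  "recentered f c j = (\<Sum>\<^sub>\<infinity>k. f k * recenter_mcoeff c k j)"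

lemma mpow_recenter_has_sum:
  "((\<lambda>j. recenter_mcoeff c k j * mpow y j) has_sum
      mpow (c + (\<chi> m. y $ m * complex_of_real (1 - norm (c $ m)))) k) UNIV"
  using has_sum_prod_recenter_coeff[of "\<lambda>m. c $ m" "\<lambda>m. complex_of_real (1 - norm (c $ m))" k "\<lambda>m. y $ m"]
  by (simp add: recenter_mcoeff_def mpow_def prod.distrib mult.commute)

lemma norm_recenter_mcoeff:
  assumes "in_polydisc c 0 1"
  shows "norm (recenter_mcoeff c k j)
           = (\<Prod>m\<in>UNIV. recenter_coeff (norm (c $ m)) (1 - norm (c $ m)) (k $ m) (j $ m))"
proof -
  have "norm (c $ m) < 1" for m
    using assms by (simp add: in_polydisc_def)
  then have "norm (1 - complex_of_real (norm (c $ m))) = 1 - norm (c $ m)" for m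
    by (metis abs_of_pos diff_gt_0_iff_gt norm_of_real of_real_1 of_real_diff)
  then show ?thesis
    by (simp add: recenter_mcoeff_def prod_norm[symmetric] norm_recenter_coeff)
qed

lemma recentered_summable_bound:
  assumes f: "order_of_magnitude f A n" and c: "in_polydisc c 0 1"
  shows "(\<lambda>k. norm (f k * recenter_mcoeff c k j)) summable_on UNIV"
    and "norm (recentered f c j)
           \<le> A * (\<Prod>m\<in>UNIV. fact (n $ m) * (real (j $ m) + 1) ^ (n $ m) / (1 - norm (c $ m)) ^ (n $ m + 1))"
proof -
  define w where "w m i = recenter_coeff (norm (c $ m)) (1 - norm (c $ m)) i (j $ m)" for m i
  have c1: "norm (c $ m) < 1" for m
    using c by (simp add: in_polydisc_def)
  have norm_eq: "norm (f k * recenter_mcoeff c k j) = norm (f k) * (\<Prod>m\<in>UNIV. w m (k $ m))" for k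
    using c by (simp add: norm_mult norm_recenter_mcoeff w_def)
  have w: "0 \<le> w m i" for m i
    using c1[of m] by (simp add: w_def recenter_coeff_nonneg)
  have summable: "(\<lambda>i. (real i + 1) ^ (n $ m) * w m i) summable_on UNIV" for m
    using weighted_recenter_coeff_summable_bound(1) c1 by (simp add: w_def)
  show abs_summable: "(\<lambda>k. norm (f k * recenter_mcoeff c k j)) summable_on UNIV"
    using order_of_magnitude_weighted_summable(1)[OF f w summable] by (simp add: norm_eq)
  have "norm (recentered f c j) \<le> (\<Sum>\<^sub>\<infinity>k. norm (f k) * (\<Prod>m\<in>UNIV. w m (k $ m)))"
    using norm_infsum_bound[OF abs_summable] by (simp add: recentered_def norm_eq)
  also have "\<dots> \<le> A * (\<Prod>m\<in>UNIV. \<Sum>\<^sub>\<infinity>i. (real i + 1) ^ (n $ m) * w m i)"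
    by (rule order_of_magnitude_weighted_summable(2)[OF f w summable])
  also have "\<dots> \<le> A * (\<Prod>m\<in>UNIV. fact (n $ m) * (real (j $ m) + 1) ^ (n $ m) / (1 - norm (c $ m)) ^ (n $ m + 1))"
    using f c1 weighted_recenter_coeff_summable_bound(2)
    by (intro mult_left_mono prod_mono conjI infsum_nonneg)
      (auto simp: w_def order_of_magnitude_def recenter_coeff_nonneg less_imp_le)
  finally show "norm (recentered f c j)
      \<le> A * (\<Prod>m\<in>UNIV. fact (n $ m) * (real (j $ m) + 1) ^ (n $ m) / (1 - norm (c $ m)) ^ (n $ m + 1))" .
qed

lemma recentered_has_sum:
  assumes f: "order_of_magnitude f A n" and c: "in_polydisc c 0 1" and y: "in_polydisc y 0 1"
  shows "((\<lambda>j. recentered f c j * mpow y j) has_sum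
           ps_eval f (c + (\<chi> m. y $ m * complex_of_real (1 - norm (c $ m))))) UNIV"
proof -
  define w where "w = c + (\<chi> m. y $ m * complex_of_real (1 - norm (c $ m)))"
  define g where "g k j = f k * recenter_mcoeff c k j * mpow y j" for k j
  define \<rho> where "\<rho> m = norm (c $ m) + (1 - norm (c $ m)) * norm (y $ m)" for m
  have c1: "norm (c $ m) < 1" and y1: "norm (y $ m) < 1" for m
    using c y by (simp_all add: in_polydisc_def)
  have \<rho>: "0 \<le> \<rho> m" "\<rho> m < 1" for m
  proof -
    show "0 \<le> \<rho> m"
      using c1[of m] by (simp add: \<rho>_def)
    have "(1 - norm (c $ m)) * norm (y $ m) < 1 - norm (c $ m)"
      using c1[of m] y1[of m] by (simp add: mult_less_cancel_left1)
    then show "\<rho> m < 1"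
      unfolding \<rho>_def by linarith
  qed
  have row_norms: "((\<lambda>j. norm (g k j)) has_sum norm (f k) * (\<Prod>m\<in>UNIV. \<rho> m ^ (k $ m))) UNIV" for k
  proof -
    have "((\<lambda>j. norm (f k) * (\<Prod>m\<in>UNIV. recenter_coeff (norm (c $ m)) (1 - norm (c $ m)) (k $ m) (j $ m)
        * norm (y $ m) ^ (j $ m))) has_sum norm (f k) * (\<Prod>m\<in>UNIV. \<rho> m ^ (k $ m))) UNIV"
      unfolding \<rho>_def by (intro has_sum_cmult_right has_sum_prod_recenter_coeff)
    then show ?thesis
      using c by (simp add: g_def norm_mult norm_recenter_mcoeff mpow_def prod_norm[symmetric]
          norm_power prod.distrib mult.assoc)
  qed
  have "(\<lambda>k. norm (f k) * (\<Prod>m\<in>UNIV. \<rho> m ^ (k $ m))) summable_on UNIV"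
  proof (rule order_of_magnitude_weighted_summable(1)[OF f])
    show "(\<lambda>i. (real i + 1) ^ (n $ m) * \<rho> m ^ i) summable_on UNIV" for m
      using weighted_recenter_coeff_summable_bound(1)[OF \<rho>, where n = "n $ m" and j = 0]
      by (simp add: recenter_coeff_def)
  qed (simp add: \<rho>)
  moreover have "((\<lambda>j. g k j) has_sum f k * mpow w k) UNIV" for k
    unfolding g_def w_def mult.assoc by (intro has_sum_cmult_right mpow_recenter_has_sum)
  moreover have "((\<lambda>k. g k j) has_sum recentered f c j * mpow y j) UNIV" for j
  proof -
    have "(\<lambda>k. f k * recenter_mcoeff c k j) summable_on UNIV"
      using recentered_summable_bound(1)[OF f c] by (rule abs_summable_summable)
    then show ?thesis
      unfolding g_def recentered_def by (intro has_sum_cmult_left has_sum_infsum)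
  qed
  ultimately have "((\<lambda>j. recentered f c j * mpow y j) has_sum (\<Sum>\<^sub>\<infinity>k. f k * mpow w k)) UNIV"
    using row_norms by (intro has_sum_iterated_swap[where g = g]) simp_all
  then show ?thesis
    by (simp add: ps_eval_def w_def)
qed

lemma order_of_magnitude_mono:
  assumes "order_of_magnitude f A n" and "A \<le> B"
  shows "order_of_magnitude f B n"
  unfolding order_of_magnitude_def
proof (intro conjI allI)
  show "1 \<le> B" and "1 \<le> n $ m" for m
    using assms by (auto simp: order_of_magnitude_def)
  fix k
  have "norm (f k) \<le> A * (\<Prod>m\<in>UNIV. (real (k $ m) + 1) ^ (n $ m))"
    using assms(1) by (simp add: order_of_magnitude_def)
  also have "\<dots> \<le> B * (\<Prod>m\<in>UNIV. (real (k $ m) + 1) ^ (n $ m))"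
    using assms(2) by (intro mult_right_mono prod_nonneg) simp_all
  finally show "norm (f k) \<le> B * (\<Prod>m\<in>UNIV. (real (k $ m) + 1) ^ (n $ m))" .
qed

lemma powr_minus_nat_eq:
  fixes r :: real
  assumes "0 < r"
  shows "r powr (- real N - 2) = 1 / r ^ (N + 2)"
proof -
  have "- real N - 2 = - real (N + 2)"
    by simp
  then have "r powr (- real N - 2) = 1 / r powr (real (N + 2))"
    by (simp only: powr_minus_divide)
  also have "r powr (real (N + 2)) = r ^ (N + 2)"
    using assms by (rule powr_realpow)
  finally show ?thesis .
qed

lemma power_div_le_powr_mult_power:
  fixes r J :: real
  assumes "0 < r" "r \<le> 1" "0 \<le> J"
  shows "(J + 1) ^ N / r ^ (N + 1) \<le> r powr (- real N - 2) * (J + 1) ^ (N + 1)"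
proof -
  have "(J + 1) ^ N \<le> (J + 1) ^ (N + 1)"
    using assms by (intro power_increasing) simp_all
  moreover have "1 / r ^ (N + 1) \<le> 1 / r ^ (N + 2)"
    using assms by (intro divide_left_mono power_decreasing) simp_all
  ultimately have "(J + 1) ^ N * (1 / r ^ (N + 1)) \<le> (J + 1) ^ (N + 1) * (1 / r ^ (N + 2))"
    using assms by (intro mult_mono) simp_all
  then show ?thesis
    using assms by (simp add: powr_minus_nat_eq mult.commute)
qed

lemma order_of_magnitude_recentered:
  fixes f :: "nat ^ 'g \<Rightarrow> complex"
  assumes f: "order_of_magnitude f A n" and c: "in_polydisc c 0 1"
  shows "order_of_magnitude (recentered f c)
           (mfact n * A * (\<Prod>m\<in>UNIV. (1 - norm (c $ m)) powr (- real (n $ m) - 2))) (n + 1)"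
proof -
  define r where "r m = 1 - norm (c $ m)" for m
  have r: "0 < r m" "r m \<le> 1" for m
    using c by (simp_all add: r_def in_polydisc_def)
  have A: "1 \<le> A"
    using f by (simp add: order_of_magnitude_def)
  have "1 \<le> r m powr (- real (n $ m) - 2)" for m
  proof -
    have "r m ^ (n $ m + 2) \<le> 1"
      using r[of m] by (intro power_le_one) simp_all
    then show ?thesis
      using r[of m] by (simp only: powr_minus_nat_eq le_divide_eq_1 zero_less_power) simp
  qed
  then have "1 \<le> mfact n * A * (\<Prod>m\<in>UNIV. r m powr (- real (n $ m) - 2))"
    using A by (intro mult_ge1_I prod_ge_1) (simp_all add: mfact_def prod_ge_1)
  moreover have "norm (recentered f c j)
      \<le> mfact n * A * (\<Prod>m\<in>UNIV. r m powr (- real (n $ m) - 2)) * (\<Prod>m\<in>UNIV. (real (j $ m) + 1) ^ ((n + 1) $ m))"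
    for j
  proof -
    have "norm (recentered f c j)
        \<le> A * (\<Prod>m\<in>UNIV. fact (n $ m) * ((real (j $ m) + 1) ^ (n $ m) / r m ^ (n $ m + 1)))"
      using recentered_summable_bound(2)[OF f c] by (simp add: r_def)
    also have "\<dots> \<le> A * (\<Prod>m\<in>UNIV. fact (n $ m) * (r m powr (- real (n $ m) - 2) * (real (j $ m) + 1) ^ (n $ m + 1)))"
      using A r by (intro mult_left_mono prod_mono conjI mult_nonneg_nonneg divide_nonneg_pos zero_less_power
        power_div_le_powr_mult_power) simp_all
    finally show ?thesis
      by (simp add: mfact_def prod.distrib mult_ac)
  qed
  ultimately show ?thesis
    by (simp add: order_of_magnitude_def r_def)
qed

theorem mainTheorem14:
  fixes f :: "nat ^ 'g \<Rightarrow> complex" and A :: real and n :: "nat ^ 'g"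
    and c :: "complex ^ 'g"
  assumes "A \<ge> 1" and "\<forall>m. n $ m \<ge> 1"
    and "order_of_magnitude f A n"
    and "in_polydisc c 0 1"
  shows "\<exists>F :: nat ^ 'g \<Rightarrow> complex.
     (\<forall>y. in_polydisc y 0 1 \<longrightarrow>
        ((\<lambda>j. F j * mpow y j) has_sum
           ps_eval f (c + (\<chi> m. y $ m * complex_of_real (1 - norm (c $ m))))) UNIV)
   \<and> order_of_magnitude F
       (mfact n * A * exp (real (CARD('g) + l1norm_nat n)) * 2 ^ (CARD('g) + l1norm_nat n)
          * (\<Prod>m\<in>UNIV. (1 - norm (c $ m)) powr (- real (n $ m) - 2)))
       (n + 1)"
proof (intro exI conjI allI impI)
  fix y :: "complex ^ 'g"
  assume "in_polydisc y 0 1"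
  with assms(3,4) show "((\<lambda>j. recentered f c j * mpow y j) has_sum
      ps_eval f (c + (\<chi> m. y $ m * complex_of_real (1 - norm (c $ m))))) UNIV"
    by (rule recentered_has_sum)
next
  define E :: real where "E = exp (real (CARD('g) + l1norm_nat n)) * 2 ^ (CARD('g) + l1norm_nat n)"
  define B where "B = mfact n * A * (\<Prod>m\<in>UNIV. (1 - norm (c $ m)) powr (- real (n $ m) - 2))"
  have sharp: "order_of_magnitude (recentered f c) B (n + 1)"
    unfolding B_def using assms(3,4) by (rule order_of_magnitude_recentered)
  have "B \<le> B * E"
    using sharp by (intro mult_le_cancel_left1[THEN iffD2]) (simp add: E_def order_of_magnitude_def mult_ge1_I)
  then show "order_of_magnitude (recentered f c)
      (mfact n * A * exp (real (CARD('g) + l1norm_nat n)) * 2 ^ (CARD('g) + l1norm_nat n)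
         * (\<Prod>m\<in>UNIV. (1 - norm (c $ m)) powr (- real (n $ m) - 2))) (n + 1)"
    using order_of_magnitude_mono[OF sharp] by (simp add: B_def E_def mult_ac)
qed

end
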